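(* Let $G$ be a connected $2K_2$-free graph containing an induced diamond with vertex set $L_0=\{v_1,v_2,v_3,v_4\}$ and edge set $\{v_1v_2,v_2v_3,v_3v_4,v_4v_1,v_2v_4\}$. Let $L_1$ be the set of vertices of $V(G)\setminus L_0$ having a neighbor in $L_0$, and $L_2=V(G)\setminus(L_0\cup L_1)$. For $i\in\{1,2,3\}$ let $X_i=\{x\in L_1: N(x)\cap L_0=\{v_i\}\}$, and let $Y_1=\{x\in L_1: N(x)\cap L_0=\{v_1,v_2\}\}$, $Y_2=\{x\in L_1: N(x)\cap L_0=\{v_2,v_3\}\}$, $Z_1=\{x\in L_1: N(x)\cap L_0=\{v_1,v_3\}\}$, $Z_2=\{x\in L_1: N(x)\cap L_0=\{v_1,v_2,v_3\}\}$. Then: (1) $V(G)=N(v_4)\cup\{v_4\}\cup X_1\cup X_2\cup X_3\cup Y_1\cup Y_2\cup Z_1\cup Z_2\cup L_2$; (2) $X_1=\emptyset$ or $X_3=\emptyset$; (3) $X_1\cup X_2\cup Y_1$, $Y_2$, $Z_1$ and $L_2$ are independent sets; (4) there are no edges between $X_1\cup X_2\cup X_3\cup Y_1\cup Y_2\cup Z_1$ and $L_2$.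
   Context: All graphs are finite, simple and undirected. $2K_2$ is the disjoint union of two edges; $G$ is $2K_2$-free if it has no induced subgraph isomorphic to $2K_2$. $N(x)$ is the set of neighbors of $x$. A diamond is $K_4$ minus an edge. *)

theory Defs
  imports Main
begin

definition simple_graph :: "'a set \<Rightarrow> ('a \<Rightarrow> 'a \<Rightarrow> bool) \<Rightarrow> bool" where
  "simple_graph V E \<longleftrightarrow> finite V \<and> (\<forall>x y. E x y \<longrightarrow> x \<in> V \<and> y \<in> V)
     \<and> (\<forall>x y. E x y \<longrightarrow> E y x) \<and> (\<forall>x. \<not> E x x)"

definition connected_graph :: "'a set \<Rightarrow> ('a \<Rightarrow> 'a \<Rightarrow> bool) \<Rightarrow> bool" where
  "connected_graph V E \<longleftrightarrow> (\<forall>x\<in>V. \<forall>y\<in>V. E\<^sup>*\<^sup>* x y)"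

definition nbhd :: "'a set \<Rightarrow> ('a \<Rightarrow> 'a \<Rightarrow> bool) \<Rightarrow> 'a \<Rightarrow> 'a set" where
  "nbhd V E x = {y \<in> V. E x y}"

definition two_K2_free :: "'a set \<Rightarrow> ('a \<Rightarrow> 'a \<Rightarrow> bool) \<Rightarrow> bool" where
  "two_K2_free V E \<longleftrightarrow> \<not> (\<exists>a\<in>V. \<exists>b\<in>V. \<exists>c\<in>V. \<exists>d\<in>V.
      distinct [a, b, c, d] \<and> E a b \<and> E c d \<and>
      \<not> E a c \<and> \<not> E a d \<and> \<not> E b c \<and> \<not> E b d)"

definition independent_set :: "('a \<Rightarrow> 'a \<Rightarrow> bool) \<Rightarrow> 'a set \<Rightarrow> bool" where
  "independent_set E S \<longleftrightarrow> (\<forall>x\<in>S. \<forall>y\<in>S. \<not> E x y)"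

end

theory Submission
  imports Defs
begin

text \<open>Everything follows from one consequence of $2K_2$-freeness: two vertices that are both
  non-adjacent to both ends of an edge are themselves non-adjacent. Each class $X_i$, $Y_i$, $Z_1$
  misses $v_4$ and one of $v_1, v_2, v_3$, hence both ends of an edge $v_i v_4$ of the diamond, while
  $L_2$ misses all of $L_0$. For $X_1$ and $X_3$, a vertex $a \in X_1$ and $b \in X_3$ are
  non-adjacent (both miss $v_2 v_4$), and then the edges $a v_1$ and $b v_3$ form a $2K_2$.\<close>

lemma simple_graph_sym: "simple_graph V E \<Longrightarrow> E x y \<Longrightarrow> E y x"
  unfolding simple_graph_def by blast

lemma two_K2_free_miss_edge:
  assumes graph: "simple_graph V E" and free: "two_K2_free V E" and "E c d"
    and "\<not> E x c" "\<not> E x d" "\<not> E y c" "\<not> E y d"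
  shows "\<not> E x y"
proof
  assume "E x y"
  have "distinct [x, y, c, d]"
    using assms \<open>E x y\<close> unfolding simple_graph_def by auto
  moreover have "x \<in> V" "y \<in> V" "c \<in> V" "d \<in> V"
    using graph \<open>E x y\<close> \<open>E c d\<close> unfolding simple_graph_def by blast+
  ultimately show False
    using free assms \<open>E x y\<close> unfolding two_K2_free_def by blast
qed

lemma independent_set_if_miss_edge:
  assumes "simple_graph V E" "two_K2_free V E" "E c d"
    and "\<And>x. x \<in> S \<Longrightarrow> \<not> E x c \<and> \<not> E x d"
  shows "independent_set E S"
  using two_K2_free_miss_edge[OF assms(1-3)] assms(4) unfolding independent_set_def by blast

lemma Pow_three: "Pow {a, b, c} = {{}, {a}, {b}, {c}, {a, b}, {b, c}, {a, c}, {a, b, c}}"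
  by (auto simp: Pow_insert)

locale diamond_in_two_K2_free_graph =
  fixes V :: "'a set" and E :: "'a \<Rightarrow> 'a \<Rightarrow> bool" and v1 v2 v3 v4 :: 'a
  assumes graph: "simple_graph V E"
    and free: "two_K2_free V E"
    and verts: "v1 \<in> V" "v2 \<in> V" "v3 \<in> V" "v4 \<in> V" "distinct [v1, v2, v3, v4]"
    and diamond: "E v1 v2" "E v2 v3" "E v3 v4" "E v4 v1" "E v2 v4" "\<not> E v1 v3"
begin

abbreviation "L0 \<equiv> {v1, v2, v3, v4}"

definition L1 :: "'a set" where
  "L1 = {x \<in> V - L0. \<exists>v\<in>L0. E x v}"

definition L2 :: "'a set" where
  "L2 = V - (L0 \<union> L1)"

definition attached :: "'a set \<Rightarrow> 'a set" where
  "attached S = {x \<in> L1. nbhd V E x \<inter> L0 = S}"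

lemma vertices_distinct [simp]:
  "v1 \<noteq> v2" "v1 \<noteq> v3" "v1 \<noteq> v4" "v2 \<noteq> v3" "v2 \<noteq> v4" "v3 \<noteq> v4"
  "v2 \<noteq> v1" "v3 \<noteq> v1" "v4 \<noteq> v1" "v3 \<noteq> v2" "v4 \<noteq> v2" "v4 \<noteq> v3"
  using verts(5) by auto

lemma edge_sym: "E x y \<Longrightarrow> E y x"
  using simple_graph_sym[OF graph] .

lemma miss_edge: "E c d \<Longrightarrow> \<not> E x c \<Longrightarrow> \<not> E x d \<Longrightarrow> \<not> E y c \<Longrightarrow> \<not> E y d \<Longrightarrow> \<not> E x y"
  using two_K2_free_miss_edge[OF graph free] .

lemma mem_attached_iff:
  assumes "S \<subseteq> L0"
  shows "x \<in> attached S \<longleftrightarrow> x \<in> V - L0 \<and> S \<noteq> {} \<and> (\<forall>v\<in>L0. E x v \<longleftrightarrow> v \<in> S)"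
  using assms verts unfolding attached_def L1_def nbhd_def by blast

lemma mem_L2_iff: "x \<in> L2 \<longleftrightarrow> x \<in> V - L0 \<and> (\<forall>v\<in>L0. \<not> E x v)"
  unfolding L2_def L1_def by blast

lemma vertex_cover:
  "V = nbhd V E v4 \<union> {v4} \<union> attached {v1} \<union> attached {v2} \<union> attached {v3}
     \<union> attached {v1, v2} \<union> attached {v2, v3} \<union> attached {v1, v3} \<union> attached {v1, v2, v3} \<union> L2"
  (is "V = ?cover")
proof
  show "?cover \<subseteq> V"
    using verts(4) unfolding nbhd_def attached_def L1_def L2_def by blast
  show "V \<subseteq> ?cover"
  proof
    fix x assume "x \<in> V"
    show "x \<in> ?cover"
    proof (cases "x = v4 \<or> E v4 x")
      case True
      then show ?thesis using \<open>x \<in> V\<close> unfolding nbhd_def by blast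
    next
      case False
      then have "x \<notin> L0" "\<not> E x v4"
        using diamond edge_sym by blast+
      define T where "T = {v \<in> {v1, v2, v3}. E x v}"
      have "T \<subseteq> L0"
        unfolding T_def by blast
      have attached: "T \<noteq> {} \<Longrightarrow> x \<in> attached T"
        using \<open>x \<in> V\<close> \<open>x \<notin> L0\<close> \<open>\<not> E x v4\<close>
        unfolding mem_attached_iff[OF \<open>T \<subseteq> L0\<close>] by (auto simp: T_def)
      have far: "T = {} \<Longrightarrow> x \<in> L2"
        using \<open>x \<in> V\<close> \<open>x \<notin> L0\<close> \<open>\<not> E x v4\<close> by (auto simp: mem_L2_iff T_def)
      have "T \<in> Pow {v1, v2, v3}"
        unfolding T_def by blast
      then show ?thesis
        unfolding Pow_three insert_iff empty_iff
        by (elim disjE) (use attached far in blast)+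
    qed
  qed
qed

lemma attached_v1_or_v3_empty: "attached {v1} = {} \<or> attached {v3} = {}"
proof (rule ccontr)
  assume "\<not> ?thesis"
  then obtain a b where a: "a \<in> attached {v1}" and b: "b \<in> attached {v3}"
    by blast
  have "E a v1" "\<not> E a v2" "\<not> E a v3" "\<not> E a v4" "\<not> E b v1" "\<not> E b v2" "E b v3" "\<not> E b v4"
    using a b by (simp_all add: mem_attached_iff)
  then have "\<not> E a b"
    using miss_edge diamond(5) by blast
  then have "\<not> E a v1"
    using miss_edge[of b v3 a v1] \<open>E b v3\<close> \<open>\<not> E a v3\<close> \<open>\<not> E b v1\<close> diamond(6) edge_sym by blast
  with \<open>E a v1\<close> show False by contradiction
qed

lemma independent_classes:
  "independent_set E (attached {v1} \<union> attached {v2} \<union> attached {v1, v2})"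
  "independent_set E (attached {v2, v3})"
  "independent_set E (attached {v1, v3})"
  "independent_set E L2"
proof -
  show "independent_set E (attached {v1} \<union> attached {v2} \<union> attached {v1, v2})"
    by (rule independent_set_if_miss_edge[OF graph free diamond(3)]) (auto simp: mem_attached_iff)
  show "independent_set E (attached {v2, v3})"
    by (rule independent_set_if_miss_edge[OF graph free diamond(4)]) (auto simp: mem_attached_iff)
  show "independent_set E (attached {v1, v3})"
    by (rule independent_set_if_miss_edge[OF graph free diamond(5)]) (auto simp: mem_attached_iff)
  show "independent_set E L2"
    by (rule independent_set_if_miss_edge[OF graph free diamond(1)]) (simp add: mem_L2_iff)
qed

lemma no_edge_attached_L2:
  assumes "S \<subseteq> {v1, v2, v3}" "\<not> {v1, v2, v3} \<subseteq> S" "x \<in> attached S" "y \<in> L2"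
  shows "\<not> E x y"
proof -
  obtain v where v: "v \<in> {v1, v2, v3}" "v \<notin> S"
    using assms(1,2) by blast
  have x: "\<forall>w\<in>L0. E x w \<longleftrightarrow> w \<in> S"
    using assms(1,3) mem_attached_iff[of S x] by auto
  have "E v v4"
    using v diamond edge_sym by blast
  moreover have "\<not> E x v" "\<not> E x v4"
    using x assms(1) v by auto
  moreover have "\<not> E y v" "\<not> E y v4"
    using assms(4) v by (auto simp: mem_L2_iff)
  ultimately show ?thesis
    using miss_edge by blast
qed

lemma classes_anticomplete_L2:
  "\<forall>x \<in> attached {v1} \<union> attached {v2} \<union> attached {v3} \<union> attached {v1, v2} \<union> attached {v2, v3}
      \<union> attached {v1, v3}. \<forall>y \<in> L2. \<not> E x y"
  using no_edge_attached_L2[of "{v1}"] no_edge_attached_L2[of "{v2}"] no_edge_attached_L2[of "{v3}"]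
    no_edge_attached_L2[of "{v1, v2}"] no_edge_attached_L2[of "{v2, v3}"]
    no_edge_attached_L2[of "{v1, v3}"]
  by auto

end

theorem lemma3p6:
  fixes V :: "'a set" and E :: "'a \<Rightarrow> 'a \<Rightarrow> bool" and v1 v2 v3 v4 :: 'a
  assumes graph: "simple_graph V E"
    and conn: "connected_graph V E"
    and free: "two_K2_free V E"
    and verts: "v1 \<in> V" "v2 \<in> V" "v3 \<in> V" "v4 \<in> V" "distinct [v1, v2, v3, v4]"
    and diamond: "E v1 v2" "E v2 v3" "E v3 v4" "E v4 v1" "E v2 v4" "\<not> E v1 v3"
  defines "L0 \<equiv> {v1, v2, v3, v4}"
  defines "L1 \<equiv> {x \<in> V - L0. \<exists>v\<in>L0. E x v}"
  defines "L2 \<equiv> V - (L0 \<union> L1)"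
  defines "X1 \<equiv> {x \<in> L1. nbhd V E x \<inter> L0 = {v1}}"
  defines "X2 \<equiv> {x \<in> L1. nbhd V E x \<inter> L0 = {v2}}"
  defines "X3 \<equiv> {x \<in> L1. nbhd V E x \<inter> L0 = {v3}}"
  defines "Y1 \<equiv> {x \<in> L1. nbhd V E x \<inter> L0 = {v1, v2}}"
  defines "Y2 \<equiv> {x \<in> L1. nbhd V E x \<inter> L0 = {v2, v3}}"
  defines "Z1 \<equiv> {x \<in> L1. nbhd V E x \<inter> L0 = {v1, v3}}"
  defines "Z2 \<equiv> {x \<in> L1. nbhd V E x \<inter> L0 = {v1, v2, v3}}"
  shows "(V = nbhd V E v4 \<union> {v4} \<union> X1 \<union> X2 \<union> X3 \<union> Y1 \<union> Y2 \<union> Z1 \<union> Z2 \<union> L2)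
    \<and> (X1 = {} \<or> X3 = {})
    \<and> (independent_set E (X1 \<union> X2 \<union> Y1) \<and> independent_set E Y2
       \<and> independent_set E Z1 \<and> independent_set E L2)
    \<and> (\<forall>x\<in>X1 \<union> X2 \<union> X3 \<union> Y1 \<union> Y2 \<union> Z1. \<forall>y\<in>L2. \<not> E x y)"
proof -
  interpret D: diamond_in_two_K2_free_graph V E v1 v2 v3 v4
    using graph free verts diamond by unfold_locales
  have classes:
    "X1 = D.attached {v1}" "X2 = D.attached {v2}" "X3 = D.attached {v3}"
    "Y1 = D.attached {v1, v2}" "Y2 = D.attached {v2, v3}"
    "Z1 = D.attached {v1, v3}" "Z2 = D.attached {v1, v2, v3}" "L2 = D.L2"
    unfolding X1_def X2_def X3_def Y1_def Y2_def Z1_def Z2_def L2_def L1_def L0_def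
      D.attached_def D.L2_def D.L1_def
    by (rule refl)+
  show ?thesis
    unfolding classes
    using D.vertex_cover D.attached_v1_or_v3_empty D.independent_classes D.classes_anticomplete_L2
    by (intro conjI)
qed

end
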